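(* Let a document collection $\mathcal{D}$ be partitioned into $n$ pairwise disjoint shards $D_1,\dots,D_n$, and let $r\ge 1$ identical replicas of this partition be stored, each of the $nr$ shard replicas on its own node. Fix a query $q$ with a unique relevant document $d_q$, and let $p(j)$ be the probability that $d_q$ is stored in $D_j$ (so $\sum_{j=1}^n p(j)=1$). Each node independently fails to respond with probability $f\in[0,1]$, independently of the location of $d_q$. A selection chooses some replicas of some shards; for $1\le i\le r$ let $S_i\subseteq\{D_1,\dots,D_n\}$ be the set of shards of which at least $i$ replicas are selected (so $S_r\subseteq S_{r-1}\subseteq\dots\subseteq S_1$). Let $SP(f,\bigcup_{i=1}^r S_i)$ denote the probability that $d_q$ is found, i.e., that $d_q$ lies in a shard of which some selected replica responds. Then \[ SP\Big(f,\bigcup_{i=1}^r S_i\Big)=(1-f)\left(\sum_{D_j\in S_1}p(j)+\sum_{D_j\in S_2}f\,p(j)+\dots+\sum_{D_j\in S_r}f^{r-1}p(j)\right). \]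
   Context: Distributed search model: each node searches only its own shard replica; the query is sent to the selected replicas, and the results of nodes that fail to respond (probability $f$ each, independently) are dropped. *)

theory Defs
  imports "HOL-Probability.Probability"
begin

text \<open>Shards are indexed by j in {..<n}, replicas by l in {..<r}; node (j,l) stores
 replica l of shard j.
 A failure configuration F assigns True to the nodes that fail to respond; each node
 fails independently with probability f (Bernoulli), independently of the location.\<close>

definition fail_pmf :: "nat \<Rightarrow> nat \<Rightarrow> real \<Rightarrow> (nat \<times> nat \<Rightarrow> bool) pmf" where
  "fail_pmf n r f = Pi_pmf ({..<n} \<times> {..<r}) False (\<lambda>_. bernoulli_pmf f)"

definition SP :: "nat pmf \<Rightarrow> nat \<Rightarrow> nat \<Rightarrow> real \<Rightarrow> (nat \<times> nat) set \<Rightarrow> real" where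
  "SP loc n r f Sel =
     measure_pmf.prob (pair_pmf loc (fail_pmf n r f))
       {(d, F). \<exists>l. (d, l) \<in> Sel \<and> \<not> F (d, l)}"

definition sel_shards :: "nat \<Rightarrow> (nat \<times> nat) set \<Rightarrow> nat \<Rightarrow> nat set" where
  "sel_shards n Sel i = {j \<in> {..<n}. i \<le> card {l. (j, l) \<in> Sel}}"

end

theory Submission
  imports Defs
begin

text \<open>Shard d with c selected replicas misses the document only if all c of them fail, which happens
  with probability f^c. Hence SP is the sum over d of (1 - f^c_d) p(d), and
  1 - f^c = (1 - f)(1 + f + ... + f^(c-1)). Exchanging the sums over shards and over i, the term
  f^(i-1) p(d) is collected exactly for the shards d with at least i selected replicas, i.e. d \<in> S_i.\<close>

lemma one_diff_power_eq_atLeastAtMost: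
  fixes x :: "'a::comm_ring_1"
  shows "1 - x ^ c = (1 - x) * (\<Sum>i = 1..c. x ^ (i - 1))"
proof -
  have "(\<Sum>i = 1..c. x ^ (i - 1)) = (\<Sum>i<c. x ^ i)"
    by (induction c) (simp_all add: sum.cl_ivl_Suc lessThan_Suc)
  then show ?thesis by (simp add: one_diff_power_eq)
qed

lemma measure_pair_pmf_finite_support:
  assumes "finite S" "set_pmf A \<subseteq> S"
  shows "measure_pmf.prob (pair_pmf A B) E
           = (\<Sum>a\<in>S. measure_pmf.prob B {b. (a, b) \<in> E} * pmf A a)"
proof -
  have "emeasure (pair_pmf A B) E = (\<integral>\<^sup>+x. indicator E x \<partial>pair_pmf A B)"
    by simp
  also have "\<dots> = (\<integral>\<^sup>+a. \<integral>\<^sup>+b. indicator {b. (a, b) \<in> E} b \<partial>B \<partial>A)"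
    by (simp add: nn_integral_pair_pmf' indicator_def)
  also have "\<dots> = (\<integral>\<^sup>+a. ennreal (measure_pmf.prob B {b. (a, b) \<in> E}) \<partial>A)"
    by (simp add: measure_pmf.emeasure_eq_measure)
  also have "\<dots> = (\<Sum>a\<in>S. ennreal (measure_pmf.prob B {b. (a, b) \<in> E}) * pmf A a)"
    using assms by (intro nn_integral_measure_pmf_support) auto
  also have "\<dots> = ennreal (\<Sum>a\<in>S. measure_pmf.prob B {b. (a, b) \<in> E} * pmf A a)"
    by (simp add: ennreal_mult sum_ennreal [symmetric])
  finally show ?thesis
    by (simp add: measure_pmf.emeasure_eq_measure sum_nonneg)
qed

lemma prob_fail_pmf_all_fail:
  assumes "0 \<le> f" "f \<le> 1" "d < n" "L \<subseteq> {..<r}"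
  shows "measure_pmf.prob (fail_pmf n r f) {F. \<forall>l\<in>L. F (d, l)} = f ^ card L"
proof -
  define A where "A = {..<n} \<times> {..<r}"
  define B where "B = (\<lambda>x. if x \<in> {d} \<times> L then {True} else (UNIV :: bool set))"
  have "{F. \<forall>l\<in>L. F (d, l)} = Pi A B"
    using assms by (auto simp: A_def B_def Pi_def)
  then have "measure_pmf.prob (fail_pmf n r f) {F. \<forall>l\<in>L. F (d, l)}
               = (\<Prod>x\<in>A. measure_pmf.prob (bernoulli_pmf f) (B x))"
    unfolding fail_pmf_def A_def by (simp add: measure_Pi_pmf_Pi)
  also have "\<dots> = (\<Prod>x\<in>A. if x \<in> {d} \<times> L then f else 1)"
    using assms by (intro prod.cong) (auto simp: B_def measure_pmf_single)
  also have "\<dots> = f ^ card ({d} \<times> L)"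
    using assms by (simp add: prod.If_cases A_def Int_absorb1 subset_eq)
  finally show ?thesis
    by (simp add: card_cartesian_product)
qed

lemma prob_fail_pmf_some_responds:
  assumes "0 \<le> f" "f \<le> 1" "d < n" "L \<subseteq> {..<r}"
  shows "measure_pmf.prob (fail_pmf n r f) {F. \<exists>l\<in>L. \<not> F (d, l)} = 1 - f ^ card L"
proof -
  have "{F. \<exists>l\<in>L. \<not> F (d, l)} = UNIV - {F. \<forall>l\<in>L. F (d, l)}"
    by auto
  then show ?thesis
    using measure_pmf.prob_compl [of "{F. \<forall>l\<in>L. F (d, l)}" "fail_pmf n r f"]
          prob_fail_pmf_all_fail [OF assms] by simp
qed

lemma SP_eq_sum_shards:
  assumes "set_pmf loc \<subseteq> {..<n}" "0 \<le> f" "f \<le> 1" "Sel \<subseteq> {..<n} \<times> {..<r}"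
  shows "SP loc n r f Sel = (\<Sum>d<n. (1 - f ^ card {l. (d, l) \<in> Sel}) * pmf loc d)"
proof -
  have "measure_pmf.prob (fail_pmf n r f) {F. \<exists>l. (d, l) \<in> Sel \<and> \<not> F (d, l)}
          = 1 - f ^ card {l. (d, l) \<in> Sel}" if "d < n" for d
    using prob_fail_pmf_some_responds [OF assms(2,3) that, of "{l. (d, l) \<in> Sel}" r] assms(4)
    by (auto simp: Bex_def)
  then show ?thesis
    unfolding SP_def using assms(1)
    by (subst measure_pair_pmf_finite_support [where S = "{..<n}"]) auto
qed

lemma sum_sel_shards_swap:
  fixes g :: "nat \<Rightarrow> nat \<Rightarrow> 'a::comm_monoid_add"
  assumes "Sel \<subseteq> {..<n} \<times> {..<r}"
  shows "(\<Sum>i = 1..r. \<Sum>j \<in> sel_shards n Sel i. g i j)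
           = (\<Sum>j<n. \<Sum>i = 1..card {l. (j, l) \<in> Sel}. g i j)"
proof -
  have card_le: "card {l. (j, l) \<in> Sel} \<le> r" for j
    using assms card_mono [of "{..<r}" "{l. (j, l) \<in> Sel}"] by auto
  have "(\<Sum>i = 1..r. \<Sum>j \<in> sel_shards n Sel i. g i j)
          = (\<Sum>i = 1..r. \<Sum>j<n. if i \<le> card {l. (j, l) \<in> Sel} then g i j else 0)"
    unfolding sel_shards_def by (simp add: sum.inter_filter [symmetric])
  also have "\<dots> = (\<Sum>j<n. \<Sum>i = 1..r. if i \<le> card {l. (j, l) \<in> Sel} then g i j else 0)"
    by (rule sum.swap)
  also have "\<dots> = (\<Sum>j<n. \<Sum>i = 1..card {l. (j, l) \<in> Sel}. g i j)"
  proof (rule sum.cong [OF refl])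
    fix j
    have "{1..r} \<inter> {i. i \<le> card {l. (j, l) \<in> Sel}} = {1..card {l. (j, l) \<in> Sel}}"
      using card_le [of j] by auto
    then show "(\<Sum>i = 1..r. if i \<le> card {l. (j, l) \<in> Sel} then g i j else 0)
                 = (\<Sum>i = 1..card {l. (j, l) \<in> Sel}. g i j)"
      by (simp add: sum.If_cases)
  qed
  finally show ?thesis .
qed

theorem lemma1:
  fixes n r :: nat and f :: real and loc :: "nat pmf" and Sel :: "(nat \<times> nat) set"
  assumes "r \<ge> 1"
    and "set_pmf loc \<subseteq> {..<n}"
    and "0 \<le> f" and "f \<le> 1"
    and "Sel \<subseteq> {..<n} \<times> {..<r}"
  shows "SP loc n r f Sel =
    (1 - f) * (\<Sum>i = 1..r. \<Sum>j \<in> sel_shards n Sel i. f ^ (i - 1) * pmf loc j)"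
proof -
  have "SP loc n r f Sel = (\<Sum>d<n. (1 - f ^ card {l. (d, l) \<in> Sel}) * pmf loc d)"
    using assms(2-5) by (rule SP_eq_sum_shards)
  also have "\<dots> = (1 - f) * (\<Sum>d<n. \<Sum>i = 1..card {l. (d, l) \<in> Sel}. f ^ (i - 1) * pmf loc d)"
    by (simp add: one_diff_power_eq_atLeastAtMost sum_distrib_left sum_distrib_right mult.assoc)
  also have "\<dots> = (1 - f) * (\<Sum>i = 1..r. \<Sum>j \<in> sel_shards n Sel i. f ^ (i - 1) * pmf loc j)"
    by (simp only: sum_sel_shards_swap [OF assms(5)])
  finally show ?thesis .
qed

end
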